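(* Let $n\ge 2$, $t\ge 2$, let $V$ be a $2n$-dimensional $\mathbb{F}_{q^t}$-vector space with $V=U_1\oplus U_2$, $\dim U_1=\dim U_2=n$, and put $T_1=PG(U_1,\mathbb{F}_{q^t})$, $T_2=PG(U_2,\mathbb{F}_{q^t})$ (two disjoint $(n-1)$-dimensional subspaces of $\Lambda=PG(V,\mathbb{F}_{q^t})=PG(2n-1,q^t)$). Let $f:U_1\to U_2$ be an invertible semilinear map with companion automorphism $\sigma\in\mathrm{Aut}(\mathbb{F}_{q^t})$ such that $\mathrm{Fix}(\sigma)=\mathbb{F}_q$, and let $\Phi_f:T_1\to T_2$ be the induced collineation, $\langle\mathbf u\rangle_{q^t}\mapsto\langle f(\mathbf u)\rangle_{q^t}$. Then for every $\rho\in\mathbb{F}_{q^t}^*$ the set $$L_{\rho,f}=\{\langle \mathbf u+\rho f(\mathbf u)\rangle_{q^t}:\mathbf u\in U_1\setminus\{\mathbf 0\}\},$$ which is the $\mathbb{F}_q$-linear set defined by the $\mathbb{F}_q$-subspace $W_{\rho,f}=\{\mathbf u+\rho f(\mathbf u):\mathbf u\in U_1\}$ (of $\mathbb{F}_q$-dimension $tn$), is an $\mathbb{F}_q$-linear set of $\Lambda$ of pseudoregulus type, whose associated pseudoregulus is $\{\langle P,P^{\Phi_f}\rangle_{q^t}:P\in T_1\}$ and whose transversal spaces are $T_1$ and $T_2$.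
   Context: A map $f:U_1\to U_2$ between $\mathbb{F}_{q^t}$-spaces is semilinear with companion automorphism $\sigma$ if it is additive and $f(\lambda\mathbf u)=\lambda^\sigma f(\mathbf u)$ for all $\lambda\in\mathbb{F}_{q^t}$. For an $\mathbb{F}_q$-subspace $U$ of $V$, $L_U=\{\langle \mathbf u\rangle_{q^t}:\mathbf u\in U\setminus\{\mathbf 0\}\}$ is the $\mathbb{F}_q$-linear set defined by $U$, of rank $\dim_{\mathbb{F}_q}U$; the weight of a subspace $PG(W,\mathbb{F}_{q^t})$ in $L_U$ is $\dim_{\mathbb{F}_q}(W\cap U)$; $L_U$ is scattered if every point has weight 1. Definition (pseudoregulus type): for integers $t,n\ge 2$, a scattered $\mathbb{F}_q$-linear set $L=L_U$ of $\Lambda=PG(2n-1,q^t)$ of rank $tn$ is of pseudoregulus type if (i) there exist $m=(q^{nt}-1)/(q^t-1)$ pairwise disjoint lines $s_1,\dots,s_m$ of $\Lambda$ each having weight $t$ in $L$, and (ii) there exist exactly two $(n-1)$-dimensional subspaces $T_1,T_2$ of $\Lambda$ disjoint from $L$ such that $T_j\cap s_i\neq\emptyset$ for all $i,j$. The set $\{s_1,\dots,s_m\}$ is called the pseudoregulus associated with $L$, and $T_1,T_2$ its transversal spaces. *)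

theory Defs
  imports Main "HOL.Vector_Spaces"
begin

(* V is the whole type 'v, a vector space over the finite field 'k via the scalar
   multiplication sc.  Fq is a subfield of 'k given as a set of scalars. *)

definition fq_span :: "('k::field \<Rightarrow> 'v::ab_group_add \<Rightarrow> 'v) \<Rightarrow> 'k set \<Rightarrow> 'v set \<Rightarrow> 'v set" where
  "fq_span sc Fq S = {x. \<exists>T c. finite T \<and> T \<subseteq> S \<and> (\<forall>v\<in>T. c v \<in> Fq) \<and> x = (\<Sum>v\<in>T. sc (c v) v)}"

definition fq_indep :: "('k::field \<Rightarrow> 'v::ab_group_add \<Rightarrow> 'v) \<Rightarrow> 'k set \<Rightarrow> 'v set \<Rightarrow> bool" where
  "fq_indep sc Fq B \<longleftrightarrow> (\<forall>T c. finite T \<and> T \<subseteq> B \<and> (\<forall>v\<in>T. c v \<in> Fq) \<and> (\<Sum>v\<in>T. sc (c v) v) = 0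
      \<longrightarrow> (\<forall>v\<in>T. c v = 0))"

definition fq_subspace :: "('k::field \<Rightarrow> 'v::ab_group_add \<Rightarrow> 'v) \<Rightarrow> 'k set \<Rightarrow> 'v set \<Rightarrow> bool" where
  "fq_subspace sc Fq X \<longleftrightarrow> 0 \<in> X \<and> (\<forall>x\<in>X. \<forall>y\<in>X. x + y \<in> X) \<and> (\<forall>c\<in>Fq. \<forall>x\<in>X. sc c x \<in> X)"

(* dimension over Fq = cardinality of a finite Fq-basis (0 if none exists) *)
definition fq_dim :: "('k::field \<Rightarrow> 'v::ab_group_add \<Rightarrow> 'v) \<Rightarrow> 'k set \<Rightarrow> 'v set \<Rightarrow> nat" where
  "fq_dim sc Fq X = (if \<exists>B. finite B \<and> B \<subseteq> X \<and> fq_indep sc Fq B \<and> fq_span sc Fq B = X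
      then card (SOME B. finite B \<and> B \<subseteq> X \<and> fq_indep sc Fq B \<and> fq_span sc Fq B = X) else 0)"

definition pt :: "('k::field \<Rightarrow> 'v::ab_group_add \<Rightarrow> 'v) \<Rightarrow> 'v \<Rightarrow> 'v set" where
  "pt sc v = range (\<lambda>c. sc c v)"

definition linear_set :: "('k::field \<Rightarrow> 'v::ab_group_add \<Rightarrow> 'v) \<Rightarrow> 'v set \<Rightarrow> 'v set set" where
  "linear_set sc W = {pt sc w | w. w \<in> W \<and> w \<noteq> 0}"

definition weight :: "('k::field \<Rightarrow> 'v::ab_group_add \<Rightarrow> 'v) \<Rightarrow> 'k set \<Rightarrow> 'v set \<Rightarrow> 'v set \<Rightarrow> nat" where
  "weight sc Fq W X = fq_dim sc Fq (X \<inter> W)"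

definition scattered :: "('k::field \<Rightarrow> 'v::ab_group_add \<Rightarrow> 'v) \<Rightarrow> 'k set \<Rightarrow> 'v set \<Rightarrow> bool" where
  "scattered sc Fq W \<longleftrightarrow> (\<forall>P\<in>linear_set sc W. weight sc Fq W P = 1)"

(* projective subspace of (projective) dimension d-1 of Lambda = PG(V): a 'k-subspace of
   vector dimension d *)
definition proj_sub :: "('k::field \<Rightarrow> 'v::ab_group_add \<Rightarrow> 'v) \<Rightarrow> nat \<Rightarrow> 'v set \<Rightarrow> bool" where
  "proj_sub sc d X \<longleftrightarrow> module.subspace sc X \<and> vector_space.dim sc X = d"

definition disjoint_from_ls :: "('k::field \<Rightarrow> 'v::ab_group_add \<Rightarrow> 'v) \<Rightarrow> 'v set \<Rightarrow> 'v set \<Rightarrow> bool" where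
  "disjoint_from_ls sc W X \<longleftrightarrow> (\<forall>P\<in>linear_set sc W. \<not> P \<subseteq> X)"

definition transversals :: "('k::field \<Rightarrow> 'v::ab_group_add \<Rightarrow> 'v) \<Rightarrow> nat \<Rightarrow> 'v set \<Rightarrow> 'v set set \<Rightarrow> 'v set set" where
  "transversals sc n W S = {T. proj_sub sc n T \<and> disjoint_from_ls sc W T \<and> (\<forall>s\<in>S. T \<inter> s \<noteq> {0})}"

definition pseudoregulus_type_with ::
  "('k::field \<Rightarrow> 'v::ab_group_add \<Rightarrow> 'v) \<Rightarrow> 'k set \<Rightarrow> nat \<Rightarrow> nat \<Rightarrow> 'v set \<Rightarrow> 'v set set \<Rightarrow> 'v set set \<Rightarrow> bool" where
  "pseudoregulus_type_with sc Fq t n W S Ts \<longleftrightarrow>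
     fq_subspace sc Fq W \<and> scattered sc Fq W \<and> fq_dim sc Fq W = t * n \<and>
     card S = (card Fq ^ (n * t) - 1) div (card Fq ^ t - 1) \<and>
     (\<forall>s\<in>S. proj_sub sc 2 s \<and> weight sc Fq W s = t) \<and>
     (\<forall>s\<in>S. \<forall>s'\<in>S. s \<noteq> s' \<longrightarrow> s \<inter> s' = {0}) \<and>
     transversals sc n W S = Ts \<and> card Ts = 2"

definition pseudoregulus_type ::
  "('k::field \<Rightarrow> 'v::ab_group_add \<Rightarrow> 'v) \<Rightarrow> 'k set \<Rightarrow> nat \<Rightarrow> nat \<Rightarrow> 'v set \<Rightarrow> bool" where
  "pseudoregulus_type sc Fq t n W \<longleftrightarrow> (\<exists>S Ts. pseudoregulus_type_with sc Fq t n W S Ts)"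

definition field_aut :: "('k::field \<Rightarrow> 'k) \<Rightarrow> bool" where
  "field_aut \<sigma> \<longleftrightarrow> bij \<sigma> \<and> (\<forall>x y. \<sigma> (x + y) = \<sigma> x + \<sigma> y) \<and> (\<forall>x y. \<sigma> (x * y) = \<sigma> x * \<sigma> y)"

end

theory Submission
  imports Defs "HOL-Library.FuncSet"
begin

(* The proof runs as follows.
   (1) Restriction of scalars: a finite F_q-subspace of size q^k has F_q-dimension k, so all
       the F_q-dimensions in the statement (rank of W, weights) reduce to counting.
   (2) The map phi u = u + rho f(u) is an F_q-linear bijection U1 -> W, hence |W| = q^(tn);
       a point <w> meets W exactly in F_q w, since c phi(u) = phi(c u) forces sigma c = c,
       so W is scattered; and the line <u, f u> meets W in the K-multiples of phi(u), which
       gives weight t.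
   (3) The lines <u, f u> depend only on the point <u>, are pairwise disjoint and there are
       (q^(tn) - 1)/(q^t - 1) of them; U1 and U2 meet all of them and are disjoint from L_W.
   (4) Conversely, an (n-1)-space T meeting every line satisfies either f(U1) <= T, or
       T + U2 = V (a group is not the union of two proper subgroups).  In the second case
       T is the graph of u -> c(u) f(u) with c constant on independent vectors; a non-fixed
       scalar of sigma then forces c = 0, so T = U1. *)


section \<open>Field automorphisms\<close>

definition fixed_field :: "('k \<Rightarrow> 'k) \<Rightarrow> 'k set" where
  "fixed_field \<sigma> = {x. \<sigma> x = x}"

context
  fixes \<sigma> :: "'k::field \<Rightarrow> 'k"
  assumes aut: "field_aut \<sigma>"
begin

lemma aut_add: "\<sigma> (x + y) = \<sigma> x + \<sigma> y"
  using aut by (simp add: field_aut_def)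

lemma aut_mult: "\<sigma> (x * y) = \<sigma> x * \<sigma> y"
  using aut by (simp add: field_aut_def)

lemma aut_inj: "\<sigma> x = \<sigma> y \<Longrightarrow> x = y"
  using aut by (auto simp: field_aut_def bij_def inj_def)

lemma aut_surj: "\<exists>y. \<sigma> y = x"
  using aut unfolding field_aut_def bij_def surj_def by metis

lemma aut_0: "\<sigma> 0 = 0"
  using aut_add[of 0 0] by (metis add_cancel_right_right add_0)

lemma aut_nonzero: "x \<noteq> 0 \<Longrightarrow> \<sigma> x \<noteq> 0"
  using aut_0 aut_inj by metis

lemma aut_uminus: "\<sigma> (- x) = - \<sigma> x"
  using aut_add[of x "- x"] aut_0 by (metis neg_eq_iff_add_eq_0 add_0_right ab_left_minus)

lemma aut_1: "\<sigma> 1 = 1"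
  using aut_mult[of 1 1] aut_nonzero[of 1] by simp

lemma aut_inverse: "\<sigma> (inverse x) = inverse (\<sigma> x)"
proof (cases "x = 0")
  case True
  then show ?thesis using aut_0 by simp
next
  case False
  then have "\<sigma> x * \<sigma> (inverse x) = 1" using aut_mult[of x "inverse x"] aut_1 by simp
  then show ?thesis by (metis inverse_unique)
qed

lemma aut_nontrivial:
  fixes t :: nat
  assumes fin: "finite (UNIV :: 'k set)"
    and card: "card (UNIV :: 'k set) = card (fixed_field \<sigma>) ^ t" and t2: "t \<ge> 2"
  shows "\<exists>l. \<sigma> l \<noteq> l"
proof (rule ccontr)
  assume "\<not> ?thesis"
  then have "fixed_field \<sigma> = UNIV" unfolding fixed_field_def by auto
  then have eq: "card (UNIV :: 'k set) = card (UNIV :: 'k set) ^ t" using card by simp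
  have "card {0::'k, 1} \<le> card (UNIV :: 'k set)" using fin by (intro card_mono) auto
  then have Q2: "card (UNIV :: 'k set) \<ge> 2" by simp
  then have "card (UNIV :: 'k set) < card (UNIV :: 'k set) ^ 2" by (simp add: power2_eq_square)
  also have "\<dots> \<le> card (UNIV :: 'k set) ^ t" using Q2 t2 by (intro power_increasing) auto
  finally show False using eq by simp
qed

end

lemma union_of_two_subgroups:
  fixes G A B :: "'a::ab_group_add set"
  assumes cover: "G \<subseteq> A \<union> B" and G: "\<And>x y. x \<in> G \<Longrightarrow> y \<in> G \<Longrightarrow> x + y \<in> G"
    and A: "\<And>x y. x \<in> A \<Longrightarrow> y \<in> A \<Longrightarrow> x - y \<in> A"
    and B: "\<And>x y. x \<in> B \<Longrightarrow> y \<in> B \<Longrightarrow> x - y \<in> B"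
  shows "G \<subseteq> A \<or> G \<subseteq> B"
proof (rule ccontr)
  assume "\<not> ?thesis"
  then obtain p q where p: "p \<in> G" "p \<notin> A" and q: "q \<in> G" "q \<notin> B" by blast
  have "p \<in> B" "q \<in> A" using p q cover by auto
  have "p + q \<in> A \<union> B" using G[OF p(1) q(1)] cover by blast
  then show False
  proof
    assume "p + q \<in> A"
    then have "(p + q) - q \<in> A" using A \<open>q \<in> A\<close> by blast
    then show False using p(2) by simp
  next
    assume "p + q \<in> B"
    then have "(p + q) - p \<in> B" using B \<open>p \<in> B\<close> by blast
    then show False using q(2) by simp
  qed
qed


section \<open>Restriction of scalars to a subfield\<close>

locale subfield_space = vector_space sc for sc :: "'k::{field,finite} \<Rightarrow> 'v::ab_group_add \<Rightarrow> 'v" +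
  fixes Fq :: "'k set"
  assumes Fq0: "0 \<in> Fq" and Fq1: "1 \<in> Fq"
    and Fq_add: "\<And>a b. a \<in> Fq \<Longrightarrow> b \<in> Fq \<Longrightarrow> a + b \<in> Fq"
    and Fq_uminus: "\<And>a. a \<in> Fq \<Longrightarrow> - a \<in> Fq"
    and Fq_mult: "\<And>a b. a \<in> Fq \<Longrightarrow> b \<in> Fq \<Longrightarrow> a * b \<in> Fq"
    and Fq_inverse: "\<And>a. a \<in> Fq \<Longrightarrow> inverse a \<in> Fq"
begin

lemma Fq_diff: "a \<in> Fq \<Longrightarrow> b \<in> Fq \<Longrightarrow> a - b \<in> Fq"
  using Fq_add Fq_uminus by (metis diff_conv_add_uminus)

lemma card_Fq_ge2: "card Fq \<ge> 2"
proof -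
  have "card {0::'k, 1} \<le> card Fq" using Fq0 Fq1 by (intro card_mono) auto
  then show ?thesis by simp
qed

lemma fq_indepD:
  "fq_indep sc Fq B \<Longrightarrow> finite T \<Longrightarrow> T \<subseteq> B \<Longrightarrow> \<forall>v\<in>T. d v \<in> Fq \<Longrightarrow>
     (\<Sum>v\<in>T. sc (d v) v) = 0 \<Longrightarrow> v \<in> T \<Longrightarrow> d v = 0"
  unfolding fq_indep_def by blast

lemma in_fq_span: "v \<in> B \<Longrightarrow> v \<in> fq_span sc Fq B"
  unfolding fq_span_def
  by (rule CollectI, rule exI[of _ "{v}"], rule exI[of _ "\<lambda>_. 1"]) (auto simp: Fq1)

(* An Fq-independent finite set B spans exactly |Fq|^|B| vectors: coordinates are unique. *)
lemma card_fq_span: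
  assumes fin: "finite B" and ind: "fq_indep sc Fq B"
  shows "card (fq_span sc Fq B) = card Fq ^ card B"
proof -
  define \<Phi> where "\<Phi> c = (\<Sum>v\<in>B. sc (c v) v)" for c
  have inj: "inj_on \<Phi> (PiE B (\<lambda>_. Fq))"
  proof (rule inj_onI)
    fix c c' assume c: "c \<in> PiE B (\<lambda>_. Fq)" and c': "c' \<in> PiE B (\<lambda>_. Fq)" and eq: "\<Phi> c = \<Phi> c'"
    have "(\<Sum>v\<in>B. sc (c v - c' v) v) = \<Phi> c - \<Phi> c'"
      unfolding \<Phi>_def by (simp add: scale_left_diff_distrib sum_subtractf)
    then have zero: "(\<Sum>v\<in>B. sc (c v - c' v) v) = 0" using eq by simp
    have "\<forall>v\<in>B. c v - c' v \<in> Fq" using c c' by (auto intro: Fq_diff simp: PiE_iff)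
    then have "\<forall>v\<in>B. c v - c' v = 0"
      using fq_indepD[OF ind fin order_refl _ zero] by blast
    then show "c = c'" by (intro PiE_ext[OF c c']) auto
  qed
  have onto: "\<Phi> ` PiE B (\<lambda>_. Fq) = fq_span sc Fq B"
  proof
    show "\<Phi> ` PiE B (\<lambda>_. Fq) \<subseteq> fq_span sc Fq B"
      unfolding fq_span_def \<Phi>_def using fin by (auto simp: PiE_iff)
    show "fq_span sc Fq B \<subseteq> \<Phi> ` PiE B (\<lambda>_. Fq)"
    proof
      fix x assume "x \<in> fq_span sc Fq B"
      then obtain T c where T: "finite T" "T \<subseteq> B" "\<forall>v\<in>T. c v \<in> Fq"
        and x: "x = (\<Sum>v\<in>T. sc (c v) v)"
        unfolding fq_span_def by blast
      define c' where "c' v = (if v \<in> T then c v else if v \<in> B then 0 else undefined)" for v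
      have "c' \<in> PiE B (\<lambda>_. Fq)" using T Fq0 by (auto simp: c'_def PiE_iff extensional_def)
      moreover have "\<Phi> c' = (\<Sum>v\<in>T. sc (c' v) v)"
        unfolding \<Phi>_def using T fin by (intro sum.mono_neutral_right) (auto simp: c'_def)
      moreover have "\<dots> = x" unfolding x by (intro sum.cong) (auto simp: c'_def)
      ultimately show "x \<in> \<Phi> ` PiE B (\<lambda>_. Fq)" by (metis image_eqI)
    qed
  qed
  have "card (fq_span sc Fq B) = card (PiE B (\<lambda>_. Fq))"
    using card_image[OF inj] onto by simp
  also have "\<dots> = card Fq ^ card B" using fin by (simp add: card_PiE)
  finally show ?thesis .
qed

lemma fq_span_sub:
  assumes X: "fq_subspace sc Fq X" and B: "B \<subseteq> X"
  shows "fq_span sc Fq B \<subseteq> X"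
proof
  fix x assume "x \<in> fq_span sc Fq B"
  then obtain T c where T: "finite T" "T \<subseteq> B" "\<forall>v\<in>T. c v \<in> Fq"
    and x: "x = (\<Sum>v\<in>T. sc (c v) v)"
    unfolding fq_span_def by blast
  have "T \<subseteq> B \<longrightarrow> (\<forall>v\<in>T. c v \<in> Fq) \<longrightarrow> (\<Sum>v\<in>T. sc (c v) v) \<in> X"
    using T(1)
  proof (induction T rule: finite_induct)
    case empty
    then show ?case using X by (simp add: fq_subspace_def)
  next
    case (insert a F)
    then show ?case using X B by (auto simp: fq_subspace_def)
  qed
  then show "x \<in> X" using T x by blast
qed

lemma fq_indep_insert:
  assumes ind: "fq_indep sc Fq B" and x: "x \<notin> fq_span sc Fq B"
  shows "fq_indep sc Fq (insert x B)"
  unfolding fq_indep_def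
proof (intro allI impI)
  fix T c
  assume H: "finite T \<and> T \<subseteq> insert x B \<and> (\<forall>v\<in>T. c v \<in> Fq) \<and> (\<Sum>v\<in>T. sc (c v) v) = 0"
  show "\<forall>v\<in>T. c v = 0"
  proof (cases "x \<in> T")
    case False
    then have "T \<subseteq> B" using H by auto
    then show ?thesis using fq_indepD[OF ind, of T c] H by blast
  next
    case True
    have sum: "sc (c x) x + (\<Sum>v\<in>T-{x}. sc (c v) v) = 0"
      using H True sum.remove[of T x "\<lambda>v. sc (c v) v"] by simp
    have cx: "c x = 0"
    proof (rule ccontr)
      assume cx: "c x \<noteq> 0"
      have "sc (c x) x = - (\<Sum>v\<in>T-{x}. sc (c v) v)" using sum by (simp add: eq_neg_iff_add_eq_0)
      then have "sc (inverse (c x)) (sc (c x) x) = sc (inverse (c x)) (- (\<Sum>v\<in>T-{x}. sc (c v) v))"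
        by simp
      then have "x = - (\<Sum>v\<in>T-{x}. sc (inverse (c x) * c v) v)"
        using cx by (simp add: scale_sum_right)
      also have "\<dots> = (\<Sum>v\<in>T-{x}. sc (- inverse (c x) * c v) v)"
        by (simp add: sum_negf)
      finally have "x = (\<Sum>v\<in>T-{x}. sc (- inverse (c x) * c v) v)" .
      moreover have "\<forall>v\<in>T-{x}. - inverse (c x) * c v \<in> Fq"
        using H True by (auto intro!: Fq_mult Fq_uminus Fq_inverse)
      ultimately have "x \<in> fq_span sc Fq B"
        unfolding fq_span_def using H
        by (intro CollectI exI[of _ "T-{x}"] exI[of _ "\<lambda>v. - inverse (c x) * c v"]) blast
      then show False using x by blast
    qed
    have "(\<Sum>v\<in>T-{x}. sc (c v) v) = 0" using sum cx by simp
    then have "\<forall>v\<in>T-{x}. c v = 0" using fq_indepD[OF ind, of "T-{x}" c] H by blast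
    then show ?thesis using cx by auto
  qed
qed

(* Every finite Fq-subspace has an Fq-basis: take an independent subset of maximal size. *)
lemma fq_basis_exists:
  assumes fin: "finite X" and X: "fq_subspace sc Fq X"
  shows "\<exists>B. finite B \<and> B \<subseteq> X \<and> fq_indep sc Fq B \<and> fq_span sc Fq B = X"
proof -
  define F where "F = {B. B \<subseteq> X \<and> fq_indep sc Fq B}"
  have finF: "finite F" using fin unfolding F_def by (simp add: finite_subset[of _ "Pow X"] subset_eq)
  have "{} \<in> F" unfolding F_def fq_indep_def by auto
  define m where "m = Max (card ` F)"
  have "m \<in> card ` F" unfolding m_def using finF \<open>{} \<in> F\<close> by (intro Max_in) auto
  then obtain B where B: "B \<in> F" and Bm: "card B = m" by blast
  have maxB: "\<forall>B'\<in>F. card B' \<le> card B" using finF Bm unfolding m_def by (auto intro: Max_ge)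
  have BX: "B \<subseteq> X" and indB: "fq_indep sc Fq B" using B by (auto simp: F_def)
  have finB: "finite B" using BX fin finite_subset by blast
  have "X \<subseteq> fq_span sc Fq B"
  proof
    fix x assume xX: "x \<in> X"
    show "x \<in> fq_span sc Fq B"
    proof (rule ccontr)
      assume nx: "x \<notin> fq_span sc Fq B"
      then have "insert x B \<in> F" using fq_indep_insert[OF indB nx] xX BX by (auto simp: F_def)
      moreover have "x \<notin> B" using nx in_fq_span by blast
      ultimately show False using maxB finB by fastforce
    qed
  qed
  then have "fq_span sc Fq B = X" using fq_span_sub[OF X BX] by blast
  then show ?thesis using finB BX indB by blast
qed

lemma fq_dim_eq:
  assumes fin: "finite X" and X: "fq_subspace sc Fq X" and card: "card X = card Fq ^ k"
  shows "fq_dim sc Fq X = k"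
proof -
  let ?P = "\<lambda>B. finite B \<and> B \<subseteq> X \<and> fq_indep sc Fq B \<and> fq_span sc Fq B = X"
  have ex: "\<exists>B. ?P B" using fq_basis_exists[OF fin X] .
  then have P: "?P (SOME B. ?P B)" by (rule someI_ex)
  then have "card Fq ^ card (SOME B. ?P B) = card Fq ^ k"
    using card_fq_span[of "SOME B. ?P B"] card by simp
  then have "card (SOME B. ?P B) = k" using card_Fq_ge2 power_inject_exp by fastforce
  then show ?thesis unfolding fq_dim_def using ex by simp
qed

lemma subspace_fq: "subspace S \<Longrightarrow> fq_subspace sc Fq S"
  unfolding fq_subspace_def using subspace_0 subspace_add subspace_scale by blast

lemma fq_subspace_Int:
  "fq_subspace sc Fq A \<Longrightarrow> fq_subspace sc Fq B \<Longrightarrow> fq_subspace sc Fq (A \<inter> B)"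
  unfolding fq_subspace_def by blast

end

lemma (in subfield_space) card_span_independent:
  assumes fin: "finite E" and E: "independent E"
  shows "card (span E) = card (UNIV :: 'k set) ^ card E"
proof -
  interpret K: subfield_space sc "UNIV :: 'k set" by unfold_locales auto
  have "fq_span sc UNIV E = span E" by (auto simp: fq_span_def span_explicit)
  moreover have "fq_indep sc UNIV E" using E unfolding fq_indep_def dependent_explicit by blast
  ultimately show ?thesis using K.card_fq_span[OF fin] by simp
qed


section \<open>The graph of a semilinear map between complementary subspaces\<close>

(* W = {u + rho f(u)} is the candidate linear set and the lines
   <u, f u> form the candidate pseudoregulus. *)
locale semilinear_graph = vector_space sc for sc :: "'k::field \<Rightarrow> 'v::ab_group_add \<Rightarrow> 'v" +
  fixes \<sigma> :: "'k \<Rightarrow> 'k" and U1 U2 :: "'v set" and f :: "'v \<Rightarrow> 'v" and \<rho> :: 'k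
  assumes aut: "field_aut \<sigma>"
    and U1: "subspace U1" and U2: "subspace U2"
    and dsum_int: "U1 \<inter> U2 = {0}"
    and f_bij: "bij_betw f U1 U2"
    and f_add: "\<forall>u\<in>U1. \<forall>v\<in>U1. f (u + v) = f u + f v"
    and f_semi: "\<forall>c. \<forall>u\<in>U1. f (sc c u) = sc (\<sigma> c) (f u)"
    and \<rho>: "\<rho> \<noteq> 0"
begin

definition phi :: "'v \<Rightarrow> 'v" where "phi u = u + sc \<rho> (f u)"

definition Wset :: "'v set" where "Wset = {u + sc \<rho> (f u) | u. u \<in> U1}"

lemma f_in: "u \<in> U1 \<Longrightarrow> f u \<in> U2"
  using f_bij by (auto simp: bij_betw_def)

lemma f_inj: "u \<in> U1 \<Longrightarrow> v \<in> U1 \<Longrightarrow> f u = f v \<Longrightarrow> u = v"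
  using f_bij by (auto simp: bij_betw_def inj_on_def)

lemma f_onto: "y \<in> U2 \<Longrightarrow> \<exists>u\<in>U1. y = f u"
  using f_bij by (auto simp: bij_betw_def)

lemma f_sum: "u \<in> U1 \<Longrightarrow> v \<in> U1 \<Longrightarrow> f (u + v) = f u + f v"
  using f_add by blast

lemma f_scale: "u \<in> U1 \<Longrightarrow> f (sc c u) = sc (\<sigma> c) (f u)"
  using f_semi by blast

lemma f_diff: "u \<in> U1 \<Longrightarrow> v \<in> U1 \<Longrightarrow> f (u - v) = f u - f v"
  using f_sum[of "u - v" v] subspace_diff[OF U1] by (simp add: eq_diff_eq)

lemma f_nonzero: "u \<in> U1 \<Longrightarrow> u \<noteq> 0 \<Longrightarrow> f u \<noteq> 0"
  using f_inj[of u 0] f_diff[of 0 0] subspace_0[OF U1] by auto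

lemma scale_f_in: "u \<in> U1 \<Longrightarrow> sc c (f u) \<in> U2"
  using subspace_scale[OF U2 f_in] by blast

lemma dsum_unique:
  assumes "a \<in> U1" "b \<in> U1" "c \<in> U2" "d \<in> U2" "a + c = b + d"
  shows "a = b \<and> c = d"
proof -
  have "a - b = d - c" using assms(5) by (simp add: algebra_simps)
  moreover have "a - b \<in> U1" using assms U1 subspace_diff by blast
  moreover have "d - c \<in> U2" using assms U2 subspace_diff by blast
  ultimately have "a - b \<in> U1 \<inter> U2" by simp
  then have "a - b = 0" using dsum_int by blast
  then show ?thesis using \<open>a - b = d - c\<close> by simp
qed

lemma indep_pair:
  assumes u: "u \<noteq> 0" and v: "v \<notin> range (\<lambda>a. sc a u)" and e: "sc p u + sc r v = 0"
  shows "p = 0 \<and> r = 0"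
proof -
  have r: "r = 0"
  proof (rule ccontr)
    assume r: "r \<noteq> 0"
    have "sc r v = - sc p u" using e by (metis add.commute eq_neg_iff_add_eq_0)
    then have "sc (inverse r) (sc r v) = sc (inverse r) (- sc p u)" by simp
    then have "v = sc (- (inverse r * p)) u" using r by (simp add: scale_minus_right)
    then show False using v by blast
  qed
  then show ?thesis using e u by simp
qed

lemma indep_pair_image:
  assumes u: "u \<in> U1" "u \<noteq> 0" and v: "v \<in> U1" "v \<notin> range (\<lambda>a. sc a u)"
    and e: "sc p (f u) + sc r (f v) = 0"
  shows "p = 0 \<and> r = 0"
proof (rule indep_pair[OF f_nonzero[OF u] _ e])
  show "f v \<notin> range (\<lambda>a. sc a (f u))"
  proof
    assume "f v \<in> range (\<lambda>a. sc a (f u))"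
    then obtain a where "f v = sc a (f u)" by blast
    moreover obtain m where "\<sigma> m = a" using aut_surj[OF aut] by blast
    ultimately have "f v = f (sc m u)" using f_scale[OF u(1)] by simp
    then have "v = sc m u" using f_inj v(1) u(1) subspace_scale[OF U1] by blast
    then show False using v(2) by blast
  qed
qed

lemma mem_line: "x \<in> span {u, f u} \<longleftrightarrow> (\<exists>a b. x = sc a u + sc b (f u))"
proof -
  have "x \<in> span {u, f u} \<longleftrightarrow> (\<exists>a b. x - sc a u = sc b (f u))"
    by (auto simp: span_insert span_singleton)
  also have "\<dots> \<longleftrightarrow> (\<exists>a b. x = sc a u + sc b (f u))"
    by (metis add_diff_cancel_left' diff_add_cancel add.commute)
  finally show ?thesis .
qed

lemma Wset_phi: "Wset = phi ` U1"
  unfolding Wset_def phi_def by auto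

lemma phi_0: "phi 0 = 0"
  unfolding phi_def using subspace_0[OF U1] f_diff[of 0 0] by simp

lemma phi_add: "u \<in> U1 \<Longrightarrow> v \<in> U1 \<Longrightarrow> phi u + phi v = phi (u + v)"
  unfolding phi_def using f_sum by (simp add: scale_right_distrib algebra_simps)

lemma phi_scale: "u \<in> U1 \<Longrightarrow> phi (sc c u) = sc c u + sc (\<rho> * \<sigma> c) (f u)"
  unfolding phi_def using f_scale by simp

lemma phi_scale_fixed: "u \<in> U1 \<Longrightarrow> c \<in> fixed_field \<sigma> \<Longrightarrow> sc c (phi u) = phi (sc c u)"
  unfolding fixed_field_def using phi_scale
  by (simp add: phi_def scale_right_distrib mult.commute)

lemma phi_inj: "u \<in> U1 \<Longrightarrow> v \<in> U1 \<Longrightarrow> phi u = phi v \<Longrightarrow> u = v"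
  unfolding phi_def using dsum_unique scale_f_in by blast

lemma W_fq_subspace: "fq_subspace sc (fixed_field \<sigma>) Wset"
  unfolding fq_subspace_def Wset_phi
proof (intro conjI ballI)
  show "0 \<in> phi ` U1" using phi_0 subspace_0[OF U1] by (metis image_eqI)
next
  fix x y assume "x \<in> phi ` U1" "y \<in> phi ` U1"
  then show "x + y \<in> phi ` U1" using phi_add subspace_add[OF U1] by (auto intro: image_eqI)
next
  fix c x assume "c \<in> fixed_field \<sigma>" "x \<in> phi ` U1"
  then show "sc c x \<in> phi ` U1" using phi_scale_fixed subspace_scale[OF U1] by (auto intro: image_eqI)
qed

(* A point <w> of L_W meets W exactly in the F_q-multiples of w: L_W is scattered. *)
lemma point_meets_W:
  assumes w: "w \<in> Wset" "w \<noteq> 0"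
  shows "pt sc w \<inter> Wset = (\<lambda>c. sc c w) ` fixed_field \<sigma>"
proof
  show "(\<lambda>c. sc c w) ` fixed_field \<sigma> \<subseteq> pt sc w \<inter> Wset"
    using W_fq_subspace w unfolding pt_def fq_subspace_def by auto
  show "pt sc w \<inter> Wset \<subseteq> (\<lambda>c. sc c w) ` fixed_field \<sigma>"
  proof
    fix x assume x: "x \<in> pt sc w \<inter> Wset"
    then obtain c where xc: "x = sc c w" unfolding pt_def by blast
    obtain u where u: "u \<in> U1" "w = phi u" using w Wset_phi by blast
    have u0: "u \<noteq> 0" using u w phi_0 by auto
    obtain u' where u': "u' \<in> U1" "x = phi u'" using x Wset_phi by blast
    have "sc c u + sc (c * \<rho>) (f u) = u' + sc \<rho> (f u')"
      using xc u u' unfolding phi_def by (simp add: scale_right_distrib)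
    then have "sc c u = u' \<and> sc (c * \<rho>) (f u) = sc \<rho> (f u')"
      using dsum_unique u'(1) u(1) subspace_scale[OF U1] scale_f_in by blast
    then have "sc (c * \<rho>) (f u) = sc (\<rho> * \<sigma> c) (f u)"
      using f_scale[OF u(1), of c] by simp
    then have "c * \<rho> = \<rho> * \<sigma> c" using f_nonzero[OF u(1) u0] by simp
    then have "c \<in> fixed_field \<sigma>" using \<rho> by (simp add: fixed_field_def mult.commute)
    then show "x \<in> (\<lambda>c. sc c w) ` fixed_field \<sigma>" using xc by blast
  qed
qed

lemma line_meets_W:
  assumes u: "u \<in> U1"
  shows "span {u, f u} \<inter> Wset = range (\<lambda>a. phi (sc a u))"
proof
  show "range (\<lambda>a. phi (sc a u)) \<subseteq> span {u, f u} \<inter> Wset"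
  proof
    fix x assume "x \<in> range (\<lambda>a. phi (sc a u))"
    then obtain a where x: "x = phi (sc a u)" by blast
    have "x \<in> span {u, f u}" using phi_scale[OF u] x mem_line by blast
    moreover have "x \<in> Wset" using x Wset_phi subspace_scale[OF U1 u] by blast
    ultimately show "x \<in> span {u, f u} \<inter> Wset" by blast
  qed
  show "span {u, f u} \<inter> Wset \<subseteq> range (\<lambda>a. phi (sc a u))"
  proof
    fix x assume x: "x \<in> span {u, f u} \<inter> Wset"
    then obtain a b where xab: "x = sc a u + sc b (f u)" using mem_line by blast
    obtain w where w: "w \<in> U1" "x = phi w" using x Wset_phi by blast
    have "sc a u + sc b (f u) = w + sc \<rho> (f w)" using xab w unfolding phi_def by simp
    then have "sc a u = w" using dsum_unique w(1) subspace_scale[OF U1 u] scale_f_in u by blast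
    then show "x \<in> range (\<lambda>a. phi (sc a u))" using w by blast
  qed
qed

lemma line_dim:
  assumes u: "u \<in> U1" "u \<noteq> 0"
  shows "dim (span {u, f u}) = 2"
proof -
  have nu: "u \<notin> span {f u}"
  proof
    assume "u \<in> span {f u}"
    then obtain a where "u = sc a (f u)" by (auto simp: span_singleton)
    then have "u \<in> U1 \<inter> U2" using scale_f_in[OF u(1), of a] u(1) by simp
    then show False using u(2) dsum_int by blast
  qed
  moreover have "independent {f u}" using f_nonzero[OF u] by simp
  ultimately have "independent (insert u {f u})" by (rule independent_insertI)
  moreover have "u \<noteq> f u" using nu span_base by blast
  ultimately show ?thesis using dim_span_eq_card_independent by fastforce
qed

lemma line_eq_iff:
  assumes u: "u \<in> U1" "u \<noteq> 0" and v: "v \<in> U1" "v \<noteq> 0"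
  shows "span {u, f u} = span {v, f v} \<longleftrightarrow> v \<in> range (\<lambda>a. sc a u)"
proof
  assume eq: "span {u, f u} = span {v, f v}"
  have "v \<in> span {u, f u}" using eq span_base by blast
  then obtain a b where "v = sc a u + sc b (f u)" using mem_line by blast
  then have "v + 0 = sc a u + sc b (f u)" by simp
  then have "v = sc a u"
    using dsum_unique v(1) subspace_scale[OF U1 u(1)] scale_f_in[OF u(1)] subspace_0[OF U2] by blast
  then show "v \<in> range (\<lambda>a. sc a u)" by blast
next
  assume "v \<in> range (\<lambda>a. sc a u)"
  then obtain c where c: "v = sc c u" by blast
  then have c0: "c \<noteq> 0" using v by auto
  have fv: "f v = sc (\<sigma> c) (f u)" using c f_scale u by simp
  have sc0: "\<sigma> c \<noteq> 0" using aut_nonzero[OF aut c0] .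
  have "sc x u + sc y (f u) = sc (x / c) v + sc (y / \<sigma> c) (f v)" for x y
    using c fv c0 sc0 by simp
  moreover have "sc x v + sc y (f v) = sc (x * c) u + sc (y * \<sigma> c) (f u)" for x y
    using c fv by simp
  ultimately show "span {u, f u} = span {v, f v}"
    unfolding set_eq_iff mem_line by metis
qed

lemma line_disjoint:
  assumes u: "u \<in> U1" "u \<noteq> 0" and v: "v \<in> U1" "v \<notin> range (\<lambda>a. sc a u)"
  shows "span {u, f u} \<inter> span {v, f v} = {0}"
proof -
  have "x = 0" if x: "x \<in> span {u, f u}" "x \<in> span {v, f v}" for x
  proof -
    obtain a b where ab: "x = sc a u + sc b (f u)" using x(1) mem_line by blast
    obtain c d where cd: "x = sc c v + sc d (f v)" using x(2) mem_line by blast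
    have "sc a u = sc c v \<and> sc b (f u) = sc d (f v)"
      using dsum_unique[of "sc a u" "sc c v" "sc b (f u)" "sc d (f v)"] ab cd u v
        subspace_scale[OF U1] scale_f_in by simp
    then have "sc a u + sc (- c) v = 0" "sc b (f u) + sc (- d) (f v) = 0"
      by (simp_all add: scale_minus_left)
    then have "a = 0" "b = 0"
      using indep_pair[OF u(2) v(2)] indep_pair_image[OF u v] by blast+
    then show ?thesis using ab by simp
  qed
  then show ?thesis by (auto simp: span_zero)
qed

lemma U1_disjoint_from_L: "disjoint_from_ls sc Wset U1"
  unfolding disjoint_from_ls_def linear_set_def
proof (clarify)
  fix w assume w: "w \<in> Wset" "w \<noteq> 0" and sub: "pt sc w \<subseteq> U1"
  obtain u where u: "u \<in> U1" "w = phi u" using w(1) Wset_phi by blast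
  have "w \<in> U1" using sub unfolding pt_def by (metis rangeI scale_one subsetD)
  then have "sc \<rho> (f u) \<in> U1" using subspace_diff[OF U1 _ u(1)] u(2) unfolding phi_def by force
  then have "sc \<rho> (f u) = 0" using scale_f_in[OF u(1)] dsum_int by blast
  then have "u = 0" using \<rho> f_nonzero[OF u(1)] by auto
  then show False using w(2) u(2) phi_0 by simp
qed

lemma U2_disjoint_from_L: "disjoint_from_ls sc Wset U2"
  unfolding disjoint_from_ls_def linear_set_def
proof (clarify)
  fix w assume w: "w \<in> Wset" "w \<noteq> 0" and sub: "pt sc w \<subseteq> U2"
  obtain u where u: "u \<in> U1" "w = phi u" using w(1) Wset_phi by blast
  have "w \<in> U2" using sub unfolding pt_def by (metis rangeI scale_one subsetD)
  then have "w - sc \<rho> (f u) \<in> U2" using subspace_diff[OF U2 _ scale_f_in[OF u(1)]] by blast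
  then have "u \<in> U2" using u(2) unfolding phi_def by simp
  then have "u = 0" using u(1) dsum_int by blast
  then show False using w(2) u(2) phi_0 by simp
qed

lemma line_meets_subspace:
  assumes T: "subspace T" and meet: "T \<inter> span {u, f u} \<noteq> {0}"
  shows "\<exists>a b. sc a u + sc b (f u) \<in> T \<and> (a \<noteq> 0 \<or> b \<noteq> 0)"
proof -
  have "0 \<in> T \<inter> span {u, f u}" using subspace_0[OF T] span_zero by simp
  then obtain y where y: "y \<in> T" "y \<in> span {u, f u}" "y \<noteq> 0" using meet by blast
  then obtain a b where ab: "y = sc a u + sc b (f u)" using mem_line by blast
  then have "a \<noteq> 0 \<or> b \<noteq> 0" using y(3) by auto
  then show ?thesis using ab y(1) by blast
qed

(* A subspace T meeting every line either contains U2 = f(U1), or every u in U1 is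
   congruent modulo U2 to a vector of T: the sets of u with f u in T, resp. with
   u + U2 meeting T, are subgroups of U1 covering it. *)
lemma transversal_dichotomy:
  assumes T: "subspace T"
    and meets: "\<And>u. u \<in> U1 \<Longrightarrow> u \<noteq> 0 \<Longrightarrow> T \<inter> span {u, f u} \<noteq> {0}"
  shows "U2 \<subseteq> T \<or> (\<forall>u\<in>U1. \<exists>z\<in>U2. u + z \<in> T)"
proof -
  define P where "P = {u\<in>U1. \<exists>z\<in>U2. u + z \<in> T}"
  define Q where "Q = {u\<in>U1. f u \<in> T}"
  have "U1 \<subseteq> P \<union> Q"
  proof
    fix u assume u: "u \<in> U1"
    show "u \<in> P \<union> Q"
    proof (cases "u = 0")
      case True
      then show ?thesis using u subspace_0[OF T] subspace_0[OF U2] unfolding P_def by force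
    next
      case False
      obtain a b where ab: "sc a u + sc b (f u) \<in> T" "a \<noteq> 0 \<or> b \<noteq> 0"
        using line_meets_subspace[OF T meets[OF u False]] by blast
      show ?thesis
      proof (cases "a = 0")
        case True
        then have "sc b (f u) \<in> T" "b \<noteq> 0" using ab by auto
        then have "sc (inverse b) (sc b (f u)) \<in> T" using subspace_scale[OF T] by blast
        then have "f u \<in> T" using \<open>b \<noteq> 0\<close> by simp
        then show ?thesis using u unfolding Q_def by blast
      next
        case False
        have "sc (inverse a) (sc a u + sc b (f u)) \<in> T" using subspace_scale[OF T ab(1)] .
        then have "u + sc (inverse a * b) (f u) \<in> T" using False by (simp add: scale_right_distrib)
        then show ?thesis using u scale_f_in[OF u] unfolding P_def by blast
      qed
    qed
  qed
  moreover have "x - y \<in> P" if xy: "x \<in> P" "y \<in> P" for x y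
  proof -
    obtain z z' where z: "z \<in> U2" "x + z \<in> T" "z' \<in> U2" "y + z' \<in> T"
      using xy unfolding P_def by blast
    have "(x + z) - (y + z') \<in> T" using subspace_diff[OF T z(2) z(4)] .
    then have "(x - y) + (z - z') \<in> T" by (simp add: algebra_simps)
    then show ?thesis
      using xy subspace_diff[OF U1] subspace_diff[OF U2 z(1) z(3)] unfolding P_def by blast
  qed
  moreover have "x - y \<in> Q" if "x \<in> Q" "y \<in> Q" for x y
    using that f_diff subspace_diff[OF U1] subspace_diff[OF T] unfolding Q_def by auto
  ultimately have "U1 \<subseteq> P \<or> U1 \<subseteq> Q"
    using union_of_two_subgroups[of U1 P Q] subspace_add[OF U1] by blast
  then show ?thesis using f_onto unfolding P_def Q_def by blast
qed

lemma graph_point: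
  assumes T: "subspace T" and TU2: "T \<inter> U2 = {0}" and w: "w \<in> U1" "w \<noteq> 0"
    and meet: "T \<inter> span {w, f w} \<noteq> {0}"
  shows "\<exists>c. w + sc c (f w) \<in> T"
proof -
  obtain a b where ab: "sc a w + sc b (f w) \<in> T" "a \<noteq> 0 \<or> b \<noteq> 0"
    using line_meets_subspace[OF T meet] by blast
  have a0: "a \<noteq> 0"
  proof
    assume "a = 0"
    then have "sc b (f w) \<in> T \<inter> U2" "b \<noteq> 0" using ab scale_f_in[OF w(1)] by auto
    then show False using TU2 f_nonzero[OF w] by auto
  qed
  have "sc (inverse a) (sc a w + sc b (f w)) \<in> T" using subspace_scale[OF T ab(1)] .
  then have "w + sc (inverse a * b) (f w) \<in> T" using a0 by (simp add: scale_right_distrib)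
  then show ?thesis by blast
qed

(* The coefficient c in w + c f(w) is the same for independent vectors u, v: compare the
   points of T on the lines of u, v and u + v; the difference lies in T \<inter> U2 = 0. *)
lemma graph_coeff_eq:
  assumes T: "subspace T" and TU2: "T \<inter> U2 = {0}"
    and meets: "\<And>w. w \<in> U1 \<Longrightarrow> w \<noteq> 0 \<Longrightarrow> T \<inter> span {w, f w} \<noteq> {0}"
    and u: "u \<in> U1" "u \<noteq> 0" and v: "v \<in> U1" "v \<notin> range (\<lambda>a. sc a u)"
    and a: "u + sc a (f u) \<in> T" and b: "v + sc b (f v) \<in> T"
  shows "a = b"
proof -
  have uv: "u + v \<in> U1" using subspace_add[OF U1 u(1) v(1)] .
  have "u + v \<noteq> 0"
  proof
    assume "u + v = 0"
    then have "v = sc (-1) u" by (simp add: eq_neg_iff_add_eq_0 add.commute)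
    then show False using v(2) by blast
  qed
  then obtain c where c: "(u + v) + sc c (f (u + v)) \<in> T"
    using graph_point[OF T TU2 uv _ meets[OF uv]] by blast
  have "(u + sc a (f u)) + (v + sc b (f v)) - ((u + v) + sc c (f (u + v))) \<in> T"
    using subspace_diff[OF T subspace_add[OF T a b] c] .
  moreover have "(u + sc a (f u)) + (v + sc b (f v)) - ((u + v) + sc c (f (u + v)))
      = sc (a - c) (f u) + sc (b - c) (f v)"
    using f_sum[OF u(1) v(1)] by (simp add: algebra_simps scale_left_diff_distrib scale_right_distrib)
  moreover have "sc (a - c) (f u) + sc (b - c) (f v) \<in> U2"
    using subspace_add[OF U2 scale_f_in[OF u(1)] scale_f_in[OF v(1)]] .
  ultimately have "sc (a - c) (f u) + sc (b - c) (f v) = 0" using TU2 by auto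
  then have "a - c = 0 \<and> b - c = 0" by (rule indep_pair_image[OF u v])
  then show ?thesis by simp
qed

end

locale pseudoregulus_setting = semilinear_graph sc \<sigma> U1 U2 f \<rho>
  for sc :: "'k::{field,finite} \<Rightarrow> 'v::ab_group_add \<Rightarrow> 'v" and \<sigma> U1 U2 f \<rho> +
  fixes n t :: nat
  assumes n2: "n \<ge> 2" and t2: "t \<ge> 2"
    and card_K: "card (UNIV :: 'k set) = card (fixed_field \<sigma>) ^ t"
    and dimV: "dim (UNIV :: 'v set) = 2 * n"
    and dimU1: "dim U1 = n" and dimU2: "dim U2 = n"
    and dsum_sum: "\<forall>v. \<exists>u1\<in>U1. \<exists>u2\<in>U2. v = u1 + u2"
begin

sublocale subfield_space sc "fixed_field \<sigma>"
  by unfold_locales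
    (auto simp: fixed_field_def aut_0[OF aut] aut_1[OF aut] aut_add[OF aut] aut_uminus[OF aut]
      aut_mult[OF aut] aut_inverse[OF aut])

(* A basis of V; dim V = 2n > 0 forces it to be finite. *)
definition Bas :: "'v set" where
  "Bas = (SOME B. independent B \<and> span B = UNIV \<and> finite B)"

lemma Bas: "independent Bas \<and> span Bas = UNIV \<and> finite Bas"
proof -
  obtain B where B: "independent B" "UNIV \<subseteq> span B" "card B = dim (UNIV::'v set)"
    using basis_exists by blast
  then have "finite B" using dimV n2 card_ge_0_finite by force
  then have "\<exists>B. independent B \<and> span B = UNIV \<and> finite B" using B by blast
  then show ?thesis unfolding Bas_def by (rule someI_ex)
qed

end

sublocale pseudoregulus_setting \<subseteq> fd: finite_dimensional_vector_space sc Bas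
  using Bas by unfold_locales auto

context pseudoregulus_setting
begin

lemma sigma_nontrivial: "\<exists>l. \<sigma> l \<noteq> l"
  using aut_nontrivial[OF aut finite_UNIV card_K t2] .

lemma exists_indep: "u \<in> U1 \<Longrightarrow> \<exists>v\<in>U1. v \<notin> range (\<lambda>a. sc a u)"
proof (rule ccontr)
  assume "\<not> (\<exists>v\<in>U1. v \<notin> range (\<lambda>a. sc a u))"
  then have "U1 \<subseteq> span {u}" by (auto simp: span_singleton)
  then have "dim U1 \<le> card {u}" by (intro dim_le_card) auto
  then show False using dimU1 n2 by simp
qed

lemma card_U1: "finite U1 \<and> card U1 = card (UNIV :: 'k set) ^ n"
proof -
  obtain E where E: "E \<subseteq> U1" "independent E" "U1 \<subseteq> span E" "card E = n"
    using basis_exists dimU1 by blast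
  have fin: "finite E" using E(4) n2 card_ge_0_finite by force
  have span: "span E = U1" using E U1 span_minimal[of E U1] by auto
  have card: "card U1 = card (UNIV :: 'k set) ^ n"
    using card_span_independent[OF fin E(2)] E(4) span by simp
  moreover have "card (UNIV :: 'k set) ^ n > 0" by (simp add: finite_UNIV_card_ge_0)
  ultimately show ?thesis using card_ge_0_finite[of U1] by simp
qed

lemma card_W: "finite Wset \<and> card Wset = card (fixed_field \<sigma>) ^ (t * n)"
proof -
  have "inj_on phi U1" using phi_inj by (auto simp: inj_on_def)
  then have "card Wset = card U1" unfolding Wset_phi by (rule card_image)
  then show ?thesis using card_U1 card_K Wset_phi by (simp add: power_mult)
qed

lemma W_dim: "fq_dim sc (fixed_field \<sigma>) Wset = t * n"
  using fq_dim_eq W_fq_subspace card_W by blast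

lemma weight_from_card:
  assumes X: "subspace X" and fin: "finite (X \<inter> Wset)"
    and card: "card (X \<inter> Wset) = card (fixed_field \<sigma>) ^ k"
  shows "weight sc (fixed_field \<sigma>) Wset X = k"
  unfolding weight_def
  using fq_dim_eq[OF fin fq_subspace_Int[OF subspace_fq[OF X] W_fq_subspace] card] .

lemma W_scattered: "scattered sc (fixed_field \<sigma>) Wset"
  unfolding scattered_def linear_set_def
proof (clarify)
  fix w assume w: "w \<in> Wset" "w \<noteq> 0"
  have X: "subspace (pt sc w)" unfolding pt_def span_singleton[symmetric] by simp
  have "inj_on (\<lambda>c. sc c w) (fixed_field \<sigma>)" using w(2) by (auto simp: inj_on_def)
  then have "card (pt sc w \<inter> Wset) = card (fixed_field \<sigma>) ^ 1"
    using point_meets_W[OF w] card_image by simp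
  then show "weight sc (fixed_field \<sigma>) Wset (pt sc w) = 1"
    using weight_from_card[OF X] point_meets_W[OF w] by simp
qed

lemma line_weight:
  assumes u: "u \<in> U1" "u \<noteq> 0"
  shows "weight sc (fixed_field \<sigma>) Wset (span {u, f u}) = t"
proof -
  have "inj (\<lambda>a. phi (sc a u))"
  proof (rule injI)
    fix a b assume "phi (sc a u) = phi (sc b u)"
    then have "sc a u = sc b u" using phi_inj subspace_scale[OF U1 u(1)] by blast
    then show "a = b" using u(2) by simp
  qed
  then have "card (span {u, f u} \<inter> Wset) = card (fixed_field \<sigma>) ^ t"
    using line_meets_W[OF u(1)] card_image card_K by metis
  then show ?thesis using weight_from_card line_meets_W[OF u(1)] by simp
qed

lemma line_generators:
  assumes u: "u \<in> U1" "u \<noteq> 0"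
  shows "{v \<in> U1 - {0}. span {v, f v} = span {u, f u}} = (\<lambda>a. sc a u) ` (UNIV - {0})"
proof
  show "{v \<in> U1 - {0}. span {v, f v} = span {u, f u}} \<subseteq> (\<lambda>a. sc a u) ` (UNIV - {0})"
    using line_eq_iff[OF u] by fastforce
  show "(\<lambda>a. sc a u) ` (UNIV - {0}) \<subseteq> {v \<in> U1 - {0}. span {v, f v} = span {u, f u}}"
  proof clarify
    fix a :: 'k assume a: "a \<noteq> 0"
    have v: "sc a u \<in> U1" "sc a u \<noteq> 0" using a u subspace_scale[OF U1] by auto
    then show "sc a u \<in> U1 - {0} \<and> span {sc a u, f (sc a u)} = span {u, f u}"
      using line_eq_iff[OF u v] by auto
  qed
qed

(* Counting: U1 - {0} is partitioned into classes of size q^t - 1, one per line. *)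
lemma card_lines:
  "card {span {u, f u} | u. u \<in> U1 \<and> u \<noteq> 0}
     = (card (fixed_field \<sigma>) ^ (n * t) - 1) div (card (fixed_field \<sigma>) ^ t - 1)"
proof -
  define L where "L u = span {u, f u}" for u
  define S where "S = {span {u, f u} | u. u \<in> U1 \<and> u \<noteq> 0}"
  define A where "A s = {u \<in> U1 - {0}. L u = s}" for s
  define Q where "Q = card (UNIV :: 'k set)"
  have SL: "S = L ` (U1 - {0})" unfolding S_def L_def by auto
  have "card (fixed_field \<sigma>) \<le> card (fixed_field \<sigma>) ^ t"
    by (rule self_le_power) (use t2 card_Fq_ge2 in auto)
  then have Q2: "Q \<ge> 2" unfolding Q_def card_K using card_Fq_ge2 by simp
  have finS: "finite S" using SL card_U1 by simp
  have cardA: "card (A s) = Q - 1" if "s \<in> S" for s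
  proof -
    obtain u where u: "u \<in> U1" "u \<noteq> 0" and s: "s = L u" using \<open>s \<in> S\<close> SL by blast
    have "A s = (\<lambda>a. sc a u) ` (UNIV - {0})"
      using line_generators[OF u] unfolding A_def s L_def .
    moreover have "inj_on (\<lambda>a. sc a u) (UNIV - {0})" using u by (auto simp: inj_on_def)
    ultimately show ?thesis unfolding Q_def by (simp add: card_image card_Diff_singleton)
  qed
  have "card (U1 - {0}) = card (\<Union> (A ` S))"
    unfolding A_def SL by (intro arg_cong[where f = card]) auto
  also have "\<dots> = (\<Sum>s\<in>S. card (A s))"
    by (rule card_UN_disjoint) (use finS card_U1 in \<open>auto simp: A_def\<close>)
  also have "\<dots> = card S * (Q - 1)" using cardA by simp
  finally have e: "card S * (Q - 1) = Q ^ n - 1"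
    using card_U1 subspace_0[OF U1] unfolding Q_def by (simp add: card_Diff_singleton)
  have "card (fixed_field \<sigma>) ^ (n * t) = Q ^ n" unfolding Q_def card_K by (metis power_mult mult.commute)
  moreover have "card (fixed_field \<sigma>) ^ t = Q" unfolding Q_def card_K ..
  moreover have "(card S * (Q - 1)) div (Q - 1) = card S" using Q2 by simp
  ultimately show ?thesis using e unfolding S_def by metis
qed

(* A transversal T meeting U2 trivially is U1: T is the graph of u \<mapsto> c f(u) with a
   coefficient c independent of u; comparing u with l u for a scalar l not fixed by sigma
   gives c (l - sigma l) = 0, so c = 0. *)
lemma transversal_contains_U1:
  assumes T: "subspace T" and TU2: "T \<inter> U2 = {0}"
    and meets: "\<And>w. w \<in> U1 \<Longrightarrow> w \<noteq> 0 \<Longrightarrow> T \<inter> span {w, f w} \<noteq> {0}"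
  shows "U1 \<subseteq> T"
proof
  fix u assume u1: "u \<in> U1"
  show "u \<in> T"
  proof (cases "u = 0")
    case True
    then show ?thesis using subspace_0[OF T] by simp
  next
    case False
    note u = u1 False
    obtain v where v: "v \<in> U1" "v \<notin> range (\<lambda>a. sc a u)" using exists_indep[OF u1] by blast
    obtain l where l: "\<sigma> l \<noteq> l" using sigma_nontrivial by blast
    have lu: "sc l u \<in> U1" "sc l u \<noteq> 0" using subspace_scale[OF U1 u1] l aut_0[OF aut] u(2) by auto
    have v_lu: "v \<notin> range (\<lambda>a. sc a (sc l u))"
    proof
      assume "v \<in> range (\<lambda>a. sc a (sc l u))"
      then obtain a where "v = sc (a * l) u" by auto
      then show False using v(2) by blast
    qed
    have v0: "v \<noteq> 0" using v(2) by (metis rangeI scale_zero_left)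
    obtain a where a: "u + sc a (f u) \<in> T" using graph_point[OF T TU2 u meets[OF u]] by blast
    obtain b where b: "v + sc b (f v) \<in> T"
      using graph_point[OF T TU2 v(1) v0 meets[OF v(1) v0]] by blast
    obtain d where d: "sc l u + sc d (f (sc l u)) \<in> T"
      using graph_point[OF T TU2 lu meets[OF lu]] by blast
    have "a = b" using graph_coeff_eq[OF T TU2 meets u v a b] .
    moreover have "d = b" using graph_coeff_eq[OF T TU2 meets lu v(1) v_lu d b] .
    ultimately have d: "sc l u + sc (a * \<sigma> l) (f u) \<in> T" using d f_scale[OF u1] by simp
    have "sc l (u + sc a (f u)) - (sc l u + sc (a * \<sigma> l) (f u)) \<in> T"
      using subspace_diff[OF T subspace_scale[OF T a] d] .
    moreover have "sc l (u + sc a (f u)) - (sc l u + sc (a * \<sigma> l) (f u)) = sc (a * (l - \<sigma> l)) (f u)"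
      by (simp add: algebra_simps scale_left_diff_distrib scale_right_distrib)
    ultimately have "sc (a * (l - \<sigma> l)) (f u) \<in> T \<inter> U2" using scale_f_in[OF u1] by simp
    then have "sc (a * (l - \<sigma> l)) (f u) = 0" using TU2 by blast
    then have "a = 0" using f_nonzero[OF u] l by simp
    then show "u \<in> T" using a by simp
  qed
qed

lemma transversal_unique:
  assumes T: "subspace T" "dim T = n"
    and meets: "\<And>u. u \<in> U1 \<Longrightarrow> u \<noteq> 0 \<Longrightarrow> T \<inter> span {u, f u} \<noteq> {0}"
  shows "T = U1 \<or> T = U2"
  using transversal_dichotomy[OF T(1) meets]
proof
  assume "U2 \<subseteq> T"
  then show ?thesis using fd.subspace_dim_equal[OF U2 T(1)] dimU2 T(2) by simp
next
  assume proj: "\<forall>u\<in>U1. \<exists>z\<in>U2. u + z \<in> T"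
  have "{x + y | x y. x \<in> T \<and> y \<in> U2} = UNIV"
  proof (intro set_eqI iffI)
    fix v :: 'v
    obtain u1 u2 where u: "u1 \<in> U1" "u2 \<in> U2" "v = u1 + u2" using dsum_sum by blast
    obtain z where z: "z \<in> U2" "u1 + z \<in> T" using proj u(1) by blast
    have "v = (u1 + z) + (u2 - z)" using u(3) by (simp add: algebra_simps)
    then show "v \<in> {x + y | x y. x \<in> T \<and> y \<in> U2}"
      using z(2) subspace_diff[OF U2 u(2) z(1)] by blast
  qed simp
  then have "dim (T \<inter> U2) = 0" using fd.dim_sums_Int[OF T(1) U2] dimV T(2) dimU2 by simp
  then have "T \<inter> U2 = {0}" using subspace_0[OF T(1)] subspace_0[OF U2] by auto
  then have "U1 \<subseteq> T" using transversal_contains_U1[OF T(1) _ meets] by blast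
  then show ?thesis using fd.subspace_dim_equal[OF U1 T(1)] dimU1 T(2) by simp
qed

lemma U1_neq_U2: "U1 \<noteq> U2"
proof
  assume "U1 = U2"
  then have "dim U1 = 0" using dsum_int by simp
  then show False using dimU1 n2 by simp
qed

lemma lines_weight:
  "\<forall>s\<in>{span {u, f u} | u. u \<in> U1 \<and> u \<noteq> 0}. proj_sub sc 2 s \<and> weight sc (fixed_field \<sigma>) Wset s = t"
  unfolding proj_sub_def using line_dim line_weight by auto

lemma lines_disjoint:
  "\<forall>s\<in>{span {u, f u} | u. u \<in> U1 \<and> u \<noteq> 0}. \<forall>s'\<in>{span {u, f u} | u. u \<in> U1 \<and> u \<noteq> 0}.
     s \<noteq> s' \<longrightarrow> s \<inter> s' = {0}"
proof (clarify)
  fix u v assume u: "u \<in> U1" "u \<noteq> 0" and v: "v \<in> U1" "v \<noteq> 0"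
    and ne: "span {u, f u} \<noteq> span {v, f v}"
  then have "v \<notin> range (\<lambda>a. sc a u)" using line_eq_iff[OF u v] by blast
  then show "span {u, f u} \<inter> span {v, f v} = {0}" using line_disjoint[OF u v(1)] by blast
qed

lemma transversals_eq:
  "transversals sc n Wset {span {u, f u} | u. u \<in> U1 \<and> u \<noteq> 0} = {U1, U2}"
proof
  show "transversals sc n Wset {span {u, f u} | u. u \<in> U1 \<and> u \<noteq> 0} \<subseteq> {U1, U2}"
  proof
    fix T assume "T \<in> transversals sc n Wset {span {u, f u} | u. u \<in> U1 \<and> u \<noteq> 0}"
    then have T: "subspace T" "dim T = n"
      and meets: "\<forall>s\<in>{span {u, f u} | u. u \<in> U1 \<and> u \<noteq> 0}. T \<inter> s \<noteq> {0}"
      unfolding transversals_def proj_sub_def by auto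
    have "T \<inter> span {u, f u} \<noteq> {0}" if "u \<in> U1" "u \<noteq> 0" for u
      using meets that by blast
    then show "T \<in> {U1, U2}" using transversal_unique[OF T] by blast
  qed
  have "U1 \<inter> span {u, f u} \<noteq> {0}" if "u \<in> U1" "u \<noteq> 0" for u
    using that span_base[of u "{u, f u}"] by blast
  then have U1_transversal: "U1 \<in> transversals sc n Wset {span {u, f u} | u. u \<in> U1 \<and> u \<noteq> 0}"
    unfolding transversals_def proj_sub_def using U1 dimU1 U1_disjoint_from_L by blast
  have "U2 \<inter> span {u, f u} \<noteq> {0}" if "u \<in> U1" "u \<noteq> 0" for u
    using that f_in f_nonzero span_base[of "f u" "{u, f u}"] by blast
  then have U2_transversal: "U2 \<in> transversals sc n Wset {span {u, f u} | u. u \<in> U1 \<and> u \<noteq> 0}"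
    unfolding transversals_def proj_sub_def using U2 dimU2 U2_disjoint_from_L by blast
  show "{U1, U2} \<subseteq> transversals sc n Wset {span {u, f u} | u. u \<in> U1 \<and> u \<noteq> 0}"
    using U1_transversal U2_transversal by blast
qed

lemma W_pseudoregulus_type:
  "pseudoregulus_type_with sc (fixed_field \<sigma>) t n Wset
     {span {u, f u} | u. u \<in> U1 \<and> u \<noteq> 0} {U1, U2}"
proof -
  have "card {U1, U2} = 2" using U1_neq_U2 by simp
  then show ?thesis
    unfolding pseudoregulus_type_with_def
    by (intro conjI W_fq_subspace W_scattered W_dim card_lines lines_weight lines_disjoint
        transversals_eq)
qed

end


theorem theorem3p5:
  fixes sc :: "'k::{field,finite} \<Rightarrow> 'v::ab_group_add \<Rightarrow> 'v"
    and \<sigma> :: "'k \<Rightarrow> 'k" and Fq :: "'k set"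
    and n t :: nat and U1 U2 :: "'v set" and f :: "'v \<Rightarrow> 'v" and \<rho> :: 'k
  assumes vs: "vector_space sc"
    and n2: "n \<ge> 2" and t2: "t \<ge> 2"
    and aut: "field_aut \<sigma>"
    and Fq_def: "Fq = {x. \<sigma> x = x}"
    and card_K: "card (UNIV :: 'k set) = card Fq ^ t"
    and dimV: "vector_space.dim sc (UNIV :: 'v set) = 2 * n"
    and U1: "module.subspace sc U1" and U2: "module.subspace sc U2"
    and dimU1: "vector_space.dim sc U1 = n" and dimU2: "vector_space.dim sc U2 = n"
    and dsum_int: "U1 \<inter> U2 = {0}"
    and dsum_sum: "\<forall>v. \<exists>u1\<in>U1. \<exists>u2\<in>U2. v = u1 + u2"
    and f_bij: "bij_betw f U1 U2"
    and f_add: "\<forall>u\<in>U1. \<forall>v\<in>U1. f (u + v) = f u + f v"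
    and f_semi: "\<forall>c. \<forall>u\<in>U1. f (sc c u) = sc (\<sigma> c) (f u)"
    and \<rho>: "\<rho> \<noteq> 0"
  shows "pseudoregulus_type_with sc Fq t n {u + sc \<rho> (f u) | u. u \<in> U1}
           {module.span sc {u, f u} | u. u \<in> U1 \<and> u \<noteq> 0} {U1, U2}"
proof -
  have Fq: "Fq = fixed_field \<sigma>" unfolding Fq_def fixed_field_def ..
  interpret pseudoregulus_setting sc \<sigma> U1 U2 f \<rho> n t
    using vs aut U1 U2 dsum_int f_bij f_add f_semi \<rho> n2 t2 card_K dimV dimU1 dimU2 dsum_sum
    unfolding pseudoregulus_setting_def pseudoregulus_setting_axioms_def semilinear_graph_def
      semilinear_graph_axioms_def Fq
    by blast
  show ?thesis using W_pseudoregulus_type unfolding Wset_def Fq .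
qed

end
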